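(* Let $\Pi$ be a clingcon program with CSP $(V,D,C)$, let $\mathbf{p}$ be the set of all propositional constants occurring in $\Pi$, and let $I=\langle I^f,X\rangle$ be an interpretation of the signature $V\cup\mathbf{p}$. Then $X$ is a constraint answer set of $\Pi$ relative to $I^f$ if and only if $I\models_{bg}\mathrm{SM}[\Pi;\mathbf{p}]$, where $\Pi$ is identified with the conjunction of the formulas $B\land N\land \mathit{Cn}\rightarrow a$ over all its rules.
   Context: Formulas are (possibly many-sorted) first-order formulas built from $\bot,\land,\lor,\rightarrow,\forall,\exists$; $\neg F$ abbreviates $F\rightarrow\bot$, $\top$ abbreviates $\neg\bot$. Stable model operator. For predicate symbols $u,c$ of the same arity, $u\le c$ denotes $\forall\mathbf{x}(u(\mathbf{x})\rightarrow c(\mathbf{x}))$; $u=c$ denotes $\forall\mathbf{x}(u(\mathbf{x})\leftrightarrow c(\mathbf{x}))$ if $u,c$ are predicate symbols and $\forall\mathbf{x}(u(\mathbf{x})=c(\mathbf{x}))$ if they are function symbols; for lists these are conjunctions of the componentwise expressions. Let $\mathbf{c}$ be a list of distinct predicate and function constants and $\widehat{\mathbf{c}}$ a list of distinct predicate and function variables corresponding to $\mathbf{c}$. Write $\mathbf{c}^{pred}$, $\widehat{\mathbf{c}}^{pred}$ for the sublists of predicate symbols. $\widehat{\mathbf{c}}<\mathbf{c}$ abbreviates $(\widehat{\mathbf{c}}^{pred}\le\mathbf{c}^{pred})\land\neg(\widehat{\mathbf{c}}=\mathbf{c})$. For a formula $F$, $F^*(\widehat{\mathbf{c}})$ is defined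 recursively: if $F$ is atomic (including $\bot$), $F^*=F'\land F$ where $F'$ is obtained from $F$ by replacing every intensional constant from $\mathbf{c}$ by the corresponding variable from $\widehat{\mathbf{c}}$; $(G\land H)^*=G^*\land H^*$; $(G\lor H)^*=G^*\lor H^*$; $(G\rightarrow H)^*=(G^*\rightarrow H^* )\land(G\rightarrow H)$; $(\forall xG)^*=\forall xG^*$; $(\exists xG)^*=\exists xG^*$. Then $\mathrm{SM}[F;\mathbf{c}]$ is the second-order formula $F\land\neg\exists\widehat{\mathbf{c}}(\widehat{\mathbf{c}}<\mathbf{c}\land F^*(\widehat{\mathbf{c}}))$. Background theory. Let $\sigma^{bg}$ be the (many-sorted) signature of a background theory $bg$; an interpretation of $\sigma^{bg}$ satisfying $bg$ is a background interpretation. For a signature $\sigma$ disjoint from $\sigma^{bg}$, an interpretation $I$ of $\sigma$ satisfies a (possibly second-order) sentence $F$ w.r.t. $bg$, written $I\models_{bg}F$, if there is a background interpretation $J$ of $\sigma^{bg}$ with the same universe as $I$ such that $I\cup J\models F$. Clingcon programs. A CSP is a tuple $(V,D,C)$ of constraint variables $V$, their domains $D$, and constraints $C$. Constraint variables are identified with object constants whose value sorts are the corresponding domains; $\sigma^{bg}$ is disjoint from $V$, contains all domain values as object constants and the symbols (such as $+,\times,\ge$) used in constraints; each constraint is a sentence $F(v_1,\dots,v_n)$ of signature $V\cup\sigma^{bg}$ obtained from a formula $F(x_1,\dots,x_n)$ of $\sigma^{bg}$ by substituting constants $v_i\in V$ for the variables $x_i$. A clingcon program $\Pi$ with CSP $(V,D,C)$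 is a set of rules $a\leftarrow B,N,\mathit{Cn}$ where $a$ is a propositional atom or $\bot$, $B$ is a set of propositional atoms, $N$ is a set of negative propositional literals $\mathit{not}\ c$, and $\mathit{Cn}$ is a set of constraints from $C$, each possibly preceded by $\mathit{not}$; as a formula, commas are conjunctions and $\mathit{not}$ is $\neg$. For a signature of object constants and propositional constants, an interpretation $I$ is identified with $\langle I^f,X\rangle$, where $I^f$ is the restriction of $I$ to the object constants and $X$ is the set of propositional constants true in $I$. The constraint reduct $\Pi^X_{I^f}$ is the set of rules $a\leftarrow B$ for each rule $a\leftarrow B,N,\mathit{Cn}$ of $\Pi$ such that $I^f\models_{bg}\mathit{Cn}$ (every constraint in $\mathit{Cn}$ not preceded by $\mathit{not}$ holds and every one preceded by $\mathit{not}$ fails) and $X\models N$. $X$ is a constraint answer set of $\Pi$ relative to $I^f$ if $X$ is a minimal model of $\Pi^X_{I^f}$ (rules with head $\bot$ act as constraints).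
   Formalization: There is a background interpretation with the same universe as I, and all background interpretations with that universe agree on the truth value of every constraint in C under $I^f$. Each condition added here is assumed in the paper as well or is needed for the statement above to hold. *)

theory Defs
  imports Main
begin

text \<open>Terms over function symbols (object constants are 0-ary function symbols);
  individual variables are natural numbers, their sort is given by the binder.\<close>
datatype (tfuns: 'f) trm = Var nat | Fn 'f "'f trm list"

datatype (ffuns: 'f, fpreds: 'p, fsorts: 's) fm =
    FBot
  | FAtom 'p "'f trm list"
  | FEq "'f trm" "'f trm"
  | FAnd "('f,'p,'s) fm" "('f,'p,'s) fm"
  | FOr "('f,'p,'s) fm" "('f,'p,'s) fm"
  | FImp "('f,'p,'s) fm" "('f,'p,'s) fm"
  | FAll nat 's "('f,'p,'s) fm"
  | FEx nat 's "('f,'p,'s) fm"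

definition fneg :: "('f,'p,'s) fm \<Rightarrow> ('f,'p,'s) fm" where
  "fneg F = FImp F FBot"

definition ftop :: "('f,'p,'s) fm" where
  "ftop = fneg FBot"

fun fv_t :: "'f trm \<Rightarrow> nat set" where
  "fv_t (Var x) = {x}"
| "fv_t (Fn f ts) = (\<Union>t\<in>set ts. fv_t t)"

fun fv :: "('f,'p,'s) fm \<Rightarrow> nat set" where
  "fv FBot = {}"
| "fv (FAtom P ts) = (\<Union>t\<in>set ts. fv_t t)"
| "fv (FEq t u) = fv_t t \<union> fv_t u"
| "fv (FAnd F G) = fv F \<union> fv G"
| "fv (FOr F G) = fv F \<union> fv G"
| "fv (FImp F G) = fv F \<union> fv G"
| "fv (FAll x s F) = fv F - {x}"
| "fv (FEx x s F) = fv F - {x}"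

definition sentence :: "('f,'p,'s) fm \<Rightarrow> bool" where
  "sentence F \<longleftrightarrow> fv F = {}"

text \<open>An interpretation of a subsignature is
  represented by a structure whose values outside that subsignature are ignored.\<close>
record ('s, 'v, 'f, 'p) struc =
  univ :: "'s \<Rightarrow> 'v set"
  fint :: "'f \<Rightarrow> 'v list \<Rightarrow> 'v"
  pint :: "'p \<Rightarrow> 'v list \<Rightarrow> bool"

fun evalt :: "('s,'v,'f,'p,'z) struc_scheme \<Rightarrow> (nat \<Rightarrow> 'v) \<Rightarrow> 'f trm \<Rightarrow> 'v" where
  "evalt I e (Var x) = e x"
| "evalt I e (Fn f ts) = fint I f (map (evalt I e) ts)"

fun sat :: "('s,'v,'f,'p,'z) struc_scheme \<Rightarrow> (nat \<Rightarrow> 'v) \<Rightarrow> ('f,'p,'s) fm \<Rightarrow> bool" where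
  "sat I e FBot = False"
| "sat I e (FAtom P ts) = pint I P (map (evalt I e) ts)"
| "sat I e (FEq t u) = (evalt I e t = evalt I e u)"
| "sat I e (FAnd F G) = (sat I e F \<and> sat I e G)"
| "sat I e (FOr F G) = (sat I e F \<or> sat I e G)"
| "sat I e (FImp F G) = (sat I e F \<longrightarrow> sat I e G)"
| "sat I e (FAll x s F) = (\<forall>v\<in>univ I s. sat I (e(x := v)) F)"
| "sat I e (FEx x s F) = (\<exists>v\<in>univ I s. sat I (e(x := v)) F)"

text \<open>Default assignment (only used for sentences, where it is irrelevant).\<close>
definition e0 :: "nat \<Rightarrow> 'v" where "e0 = (\<lambda>_. undefined)"

text \<open>The predicate variable corresponding to the intensional constant P is the
  fresh symbol Inr P; the original symbols are Inl P.\<close>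
definition lift :: "('f,'p,'s) fm \<Rightarrow> ('f,'p+'p,'s) fm" where
  "lift = map_fm id Inl id"

fun star :: "'p set \<Rightarrow> ('f,'p,'s) fm \<Rightarrow> ('f,'p+'p,'s) fm" where
  "star c FBot = FAnd FBot FBot"
| "star c (FAtom P ts) = FAnd (FAtom (if P \<in> c then Inr P else Inl P) ts) (FAtom (Inl P) ts)"
| "star c (FEq t u) = FAnd (FEq t u) (FEq t u)"
| "star c (FAnd G H) = FAnd (star c G) (star c H)"
| "star c (FOr G H) = FOr (star c G) (star c H)"
| "star c (FImp G H) = FAnd (FImp (star c G) (star c H)) (lift (FImp G H))"
| "star c (FAll x s G) = FAll x s (star c G)"
| "star c (FEx x s G) = FEx x s (star c G)"

definition ext_hat :: "('s,'v,'f,'p) struc \<Rightarrow> ('p \<Rightarrow> 'v list \<Rightarrow> bool) \<Rightarrow> ('s,'v,'f,'p+'p) struc" where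
  "ext_hat I Q = \<lparr>univ = univ I, fint = fint I, pint = case_sum (pint I) Q\<rparr>"

definition tuple_of :: "('s \<Rightarrow> 'v set) \<Rightarrow> 's list \<Rightarrow> 'v list \<Rightarrow> bool" where
  "tuple_of U ss xs \<longleftrightarrow> list_all2 (\<lambda>x s. x \<in> U s) xs ss"

definition hat_le :: "('p \<Rightarrow> 's list) \<Rightarrow> 'p set \<Rightarrow> ('s,'v,'f,'p) struc \<Rightarrow> ('p \<Rightarrow> 'v list \<Rightarrow> bool) \<Rightarrow> bool" where
  "hat_le psort c I Q \<longleftrightarrow>
     (\<forall>P\<in>c. \<forall>xs. tuple_of (univ I) (psort P) xs \<longrightarrow> Q P xs \<longrightarrow> pint I P xs)"

definition hat_eq :: "('p \<Rightarrow> 's list) \<Rightarrow> 'p set \<Rightarrow> ('s,'v,'f,'p) struc \<Rightarrow> ('p \<Rightarrow> 'v list \<Rightarrow> bool) \<Rightarrow> bool" where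
  "hat_eq psort c I Q \<longleftrightarrow>
     (\<forall>P\<in>c. \<forall>xs. tuple_of (univ I) (psort P) xs \<longrightarrow> (Q P xs \<longleftrightarrow> pint I P xs))"

definition hat_less :: "('p \<Rightarrow> 's list) \<Rightarrow> 'p set \<Rightarrow> ('s,'v,'f,'p) struc \<Rightarrow> ('p \<Rightarrow> 'v list \<Rightarrow> bool) \<Rightarrow> bool" where
  "hat_less psort c I Q \<longleftrightarrow> hat_le psort c I Q \<and> \<not> hat_eq psort c I Q"

definition SM_sat :: "('p \<Rightarrow> 's list) \<Rightarrow> 'p set \<Rightarrow> ('s,'v,'f,'p) struc \<Rightarrow> (nat \<Rightarrow> 'v) \<Rightarrow> ('f,'p,'s) fm \<Rightarrow> bool" where
  "SM_sat psort c I e F \<longleftrightarrow>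
     sat I e F \<and> \<not> (\<exists>Q. hat_less psort c I Q \<and> sat (ext_hat I Q) e (star c F))"

definition bg_interp :: "('f,'p,'s) fm set \<Rightarrow> ('s,'v,'f,'p) struc \<Rightarrow> bool" where
  "bg_interp bg J \<longleftrightarrow> (\<forall>F\<in>bg. sat J e0 F)"

text \<open>I \<union> J where I interprets the signature (sF, sP) and J the background symbols.\<close>
definition merge :: "'f set \<Rightarrow> 'p set \<Rightarrow> ('s,'v,'f,'p) struc \<Rightarrow> ('s,'v,'f,'p) struc \<Rightarrow> ('s,'v,'f,'p) struc" where
  "merge sF sP I J = \<lparr>univ = univ I,
      fint = (\<lambda>f. if f \<in> sF then fint I f else fint J f),
      pint = (\<lambda>P. if P \<in> sP then pint I P else pint J P)\<rparr>"

text \<open>I \<Turnstile>_bg Phi, where Phi is the meaning of a (possibly second-order) sentence.\<close>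
definition bg_sat :: "('f,'p,'s) fm set \<Rightarrow> 'f set \<Rightarrow> 'p set \<Rightarrow> ('s,'v,'f,'p) struc
                      \<Rightarrow> (('s,'v,'f,'p) struc \<Rightarrow> bool) \<Rightarrow> bool" where
  "bg_sat bg sF sP I Phi \<longleftrightarrow> (\<exists>J. bg_interp bg J \<and> univ J = univ I \<and> Phi (merge sF sP I J))"

text \<open>A rule  a <- B, N, Cn : head (None = bottom), positive atoms B, atoms c of the
  negative literals  not c  in N, and constraint literals (True = plain, False = preceded by not).\<close>
datatype ('f,'p,'s) rule =
  Rule (rhead: "'p option") (rpos: "'p list") (rneg: "'p list") (rcn: "(bool \<times> ('f,'p,'s) fm) list")

definition patom :: "'p \<Rightarrow> ('f,'p,'s) fm" where
  "patom a = FAtom a []"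

definition clit :: "bool \<times> ('f,'p,'s) fm \<Rightarrow> ('f,'p,'s) fm" where
  "clit l = (if fst l then snd l else fneg (snd l))"

fun conj :: "('f,'p,'s) fm list \<Rightarrow> ('f,'p,'s) fm" where
  "conj [] = ftop"
| "conj [F] = F"
| "conj (F # Fs) = FAnd F (conj Fs)"

definition rule_fm :: "('f,'p,'s) rule \<Rightarrow> ('f,'p,'s) fm" where
  "rule_fm r = FImp (conj (map patom (rpos r) @ map (fneg \<circ> patom) (rneg r) @ map clit (rcn r)))
                    (case rhead r of None \<Rightarrow> FBot | Some a \<Rightarrow> patom a)"

definition prog_fm :: "('f,'p,'s) rule list \<Rightarrow> ('f,'p,'s) fm" where
  "prog_fm Pi = conj (map rule_fm Pi)"

definition prog_atoms :: "('f,'p,'s) rule list \<Rightarrow> 'p set" where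
  "prog_atoms Pi = (\<Union>r\<in>set Pi. set_option (rhead r) \<union> set (rpos r) \<union> set (rneg r))"

text \<open>Well-formedness of a clingcon program with CSP (V, D, C) over background theory bg
  with signature (bgF, bgP) (function/object-constant and predicate symbols);
  psort gives the argument sorts of predicate symbols, D the domain (sort) of each
  constraint variable.\<close>
definition clingcon_program ::
  "'f set \<Rightarrow> ('f \<Rightarrow> 's) \<Rightarrow> ('f,'p,'s) fm set \<Rightarrow> ('f,'p,'s) fm set \<Rightarrow> 'f set \<Rightarrow> 'p set
   \<Rightarrow> ('p \<Rightarrow> 's list) \<Rightarrow> ('f,'p,'s) rule list \<Rightarrow> bool" where
  "clingcon_program V D C bg bgF bgP psort Pi \<longleftrightarrow>
     V \<inter> bgF = {} \<and> prog_atoms Pi \<inter> bgP = {} \<and>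
     (\<forall>a\<in>prog_atoms Pi. psort a = []) \<and>
     (\<forall>F\<in>bg. sentence F \<and> ffuns F \<subseteq> bgF \<and> fpreds F \<subseteq> bgP) \<and>
     (\<forall>F\<in>C. sentence F \<and> ffuns F \<subseteq> V \<union> bgF \<and> fpreds F \<subseteq> bgP) \<and>
     (\<forall>r\<in>set Pi. \<forall>l\<in>set (rcn r). snd l \<in> C)"

text \<open>The interpretation I = <I^f, X> with universe U: object constants v get Ifn v,
  propositional constants in X are true.\<close>
definition interp :: "('s \<Rightarrow> 'v set) \<Rightarrow> ('f \<Rightarrow> 'v) \<Rightarrow> 'p set \<Rightarrow> ('s,'v,'f,'p) struc" where
  "interp U Ifn X = \<lparr>univ = U, fint = (\<lambda>f _. Ifn f), pint = (\<lambda>P _. P \<in> X)\<rparr>"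

definition cn_holds :: "('f,'p,'s) fm set \<Rightarrow> 'f set \<Rightarrow> ('s \<Rightarrow> 'v set) \<Rightarrow> ('f \<Rightarrow> 'v)
                        \<Rightarrow> (bool \<times> ('f,'p,'s) fm) list \<Rightarrow> bool" where
  "cn_holds bg V U Ifn Cn \<longleftrightarrow>
     (\<forall>l\<in>set Cn. bg_sat bg V {} (interp U Ifn {}) (\<lambda>M. sat M e0 (clit l)))"

definition creduct :: "('f,'p,'s) fm set \<Rightarrow> 'f set \<Rightarrow> ('s \<Rightarrow> 'v set) \<Rightarrow> ('f \<Rightarrow> 'v) \<Rightarrow> 'p set
                       \<Rightarrow> ('f,'p,'s) rule list \<Rightarrow> ('p option \<times> 'p list) list" where
  "creduct bg V U Ifn X Pi =
     [(rhead r, rpos r). r \<leftarrow> Pi, cn_holds bg V U Ifn (rcn r) \<and> set (rneg r) \<inter> X = {}]"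

definition pmodel :: "'p set \<Rightarrow> ('p option \<times> 'p list) list \<Rightarrow> bool" where
  "pmodel Y R \<longleftrightarrow>
     (\<forall>(h, B)\<in>set R. set B \<subseteq> Y \<longrightarrow> (case h of None \<Rightarrow> False | Some a \<Rightarrow> a \<in> Y))"

definition constraint_answer_set :: "('f,'p,'s) fm set \<Rightarrow> 'f set \<Rightarrow> ('s \<Rightarrow> 'v set) \<Rightarrow> ('f \<Rightarrow> 'v)
                                     \<Rightarrow> ('f,'p,'s) rule list \<Rightarrow> 'p set \<Rightarrow> bool" where
  "constraint_answer_set bg V U Ifn Pi X \<longleftrightarrow>
     (let R = creduct bg V U Ifn X Pi in pmodel X R \<and> (\<forall>Y. Y \<subset> X \<longrightarrow> \<not> pmodel Y R))"

text \<open>Standing assumption on the background theory: there is a background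
  interpretation with universe U, and all such interpretations agree on the truth of
  every constraint of C under I^f.\<close>
definition bg_decides :: "('f,'p,'s) fm set \<Rightarrow> 'f set \<Rightarrow> ('f,'p,'s) fm set
                          \<Rightarrow> ('s \<Rightarrow> 'v set) \<Rightarrow> ('f \<Rightarrow> 'v) \<Rightarrow> bool" where
  "bg_decides bg V C U Ifn \<longleftrightarrow>
     (\<exists>J. bg_interp bg J \<and> univ J = U) \<and>
     (\<forall>J1 J2. bg_interp bg J1 \<longrightarrow> bg_interp bg J2 \<longrightarrow> univ J1 = U \<longrightarrow> univ J2 = U \<longrightarrow>
        (\<forall>F\<in>C. sat (merge V {} (interp U Ifn {}) J1) e0 F \<longleftrightarrow>
                sat (merge V {} (interp U Ifn {}) J2) e0 F))"

end

(* Under the star transformation a rule formula keeps its negated atoms and its constraints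
   (which mention no atom of the program) unchanged, while every positive occurrence of an atom a
   becomes Q(a) \<and> a.  So a tuple Q below the interpretation satisfies the starred program exactly
   when the atoms chosen by Q form a model of the reduct of the program determined by X and by the
   truth values of the constraints; SM[\<Pi>; p] therefore says that X is a minimal model of that
   reduct.  The background theory only enters through the truth values of the constraints, which
   bg_decides makes independent of the chosen background interpretation. *)
theory Submission
  imports Defs
begin

lemma evalt_cong: "fint I = fint I' \<Longrightarrow> evalt I e t = evalt I' e t"
  by (induction t) (auto cong: map_cong)

lemma sat_cong:
  assumes "univ I = univ I'" and "fint I = fint I'" and "\<forall>P\<in>fpreds F. pint I P = pint I' P"
  shows "sat I e F = sat I' e F"
proof -
  have "evalt I = evalt I'"
    using evalt_cong[OF assms(2)] by blast
  with assms(1,3) show ?thesis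
    by (induction F arbitrary: e) simp_all
qed

lemma evalt_ext_hat: "evalt (ext_hat I Q) = evalt I"
  using evalt_cong[of "ext_hat I Q" I] by (fastforce simp: ext_hat_def)

lemma univ_ext_hat [simp]: "univ (ext_hat I Q) = univ I"
  and pint_ext_hat [simp]: "pint (ext_hat I Q) (Inl P) = pint I P" "pint (ext_hat I Q) (Inr P) = Q P"
  by (simp_all add: ext_hat_def)

lemma sat_lift_ext_hat: "sat (ext_hat I Q) e (lift F) = sat I e F"
  by (induction F arbitrary: e) (simp_all add: lift_def trm.map_id0 evalt_ext_hat)

lemma sat_star_ext_hat_if_disjoint:
  "fpreds F \<inter> c = {} \<Longrightarrow> sat (ext_hat I Q) e (star c F) = sat I e F"
proof (induction F arbitrary: e)
  case (FImp F G)
  then show ?case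
    using sat_lift_ext_hat[of I Q e "FImp F G"] by auto
qed (auto simp: evalt_ext_hat)

lemma sat_conj: "sat I e (conj Fs) \<longleftrightarrow> (\<forall>F\<in>set Fs. sat I e F)"
  by (induction Fs rule: conj.induct) (auto simp: ftop_def fneg_def)

lemma sat_star_conj: "sat I e (star c (conj Fs)) \<longleftrightarrow> (\<forall>F\<in>set Fs. sat I e (star c F))"
  by (induction Fs rule: conj.induct) (auto simp: ftop_def fneg_def lift_def)

lemma sat_clit: "sat I e (clit l) \<longleftrightarrow> (fst l \<longleftrightarrow> sat I e (snd l))"
  by (simp add: clit_def fneg_def)

lemma sat_rule_fm:
  "sat M e (rule_fm r) \<longleftrightarrow>
     ((\<forall>a\<in>set (rpos r). pint M a []) \<and> (\<forall>a\<in>set (rneg r). \<not> pint M a []) \<and>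
      (\<forall>l\<in>set (rcn r). sat M e (clit l))
      \<longrightarrow> (case rhead r of None \<Rightarrow> False | Some a \<Rightarrow> pint M a []))"
  unfolding rule_fm_def sat.simps sat_conj
  by (auto simp: ball_Un patom_def fneg_def split: option.split)

lemma sat_star_rule_fm:
  assumes "set (rpos r) \<union> set (rneg r) \<union> set_option (rhead r) \<subseteq> c"
    and "\<forall>l\<in>set (rcn r). fpreds (snd l) \<inter> c = {}"
  shows "sat (ext_hat M Q) e (star c (rule_fm r)) \<longleftrightarrow>
     ((\<forall>a\<in>set (rpos r). Q a [] \<and> pint M a []) \<and> (\<forall>a\<in>set (rneg r). \<not> pint M a []) \<and>
      (\<forall>l\<in>set (rcn r). sat M e (clit l))
      \<longrightarrow> (case rhead r of None \<Rightarrow> False | Some a \<Rightarrow> Q a [] \<and> pint M a []))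
     \<and> sat M e (rule_fm r)"
proof -
  have "sat (ext_hat M Q) e (star c (clit l)) = sat M e (clit l)" if "l \<in> set (rcn r)" for l
    using assms(2) that by (intro sat_star_ext_hat_if_disjoint) (auto simp: clit_def fneg_def)
  with assms(1) show ?thesis
    unfolding rule_fm_def star.simps sat.simps sat_lift_ext_hat sat_star_conj
    by (auto simp: ball_Un patom_def fneg_def lift_def split: option.split)
qed

definition reduct :: "(bool \<times> ('f,'p,'s) fm \<Rightarrow> bool) \<Rightarrow> 'p set \<Rightarrow> ('f,'p,'s) rule list
                      \<Rightarrow> ('p option \<times> 'p list) list" where
  "reduct holds X Pi = [(rhead r, rpos r). r \<leftarrow> Pi, (\<forall>l\<in>set (rcn r). holds l) \<and> set (rneg r) \<inter> X = {}]"

definition min_pmodel :: "'p set \<Rightarrow> ('p option \<times> 'p list) list \<Rightarrow> bool" where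
  "min_pmodel Y R \<longleftrightarrow> pmodel Y R \<and> (\<forall>Z. Z \<subset> Y \<longrightarrow> \<not> pmodel Z R)"

lemma pmodel_reduct_iff:
  "pmodel Z (reduct holds X Pi) \<longleftrightarrow>
     (\<forall>r\<in>set Pi. (\<forall>l\<in>set (rcn r). holds l) \<and> set (rneg r) \<inter> X = {} \<and> set (rpos r) \<subseteq> Z
        \<longrightarrow> (case rhead r of None \<Rightarrow> False | Some a \<Rightarrow> a \<in> Z))"
  by (auto simp: pmodel_def reduct_def)

lemma rule_atoms_subset_prog_atoms:
  "r \<in> set Pi \<Longrightarrow> set (rpos r) \<union> set (rneg r) \<union> set_option (rhead r) \<subseteq> prog_atoms Pi"
  by (auto simp: prog_atoms_def)

lemma sat_prog_fm_iff_pmodel: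
  fixes M :: "('s,'v,'f,'p,'z) struc_scheme" and Pi :: "('f,'p,'s) rule list"
  defines "Y \<equiv> {a \<in> prog_atoms Pi. pint M a []}"
  shows "sat M e (prog_fm Pi) \<longleftrightarrow> pmodel Y (reduct (\<lambda>l. sat M e (clit l)) Y Pi)"
proof -
  have "sat M e (rule_fm r) \<longleftrightarrow>
      ((\<forall>l\<in>set (rcn r). sat M e (clit l)) \<and> set (rneg r) \<inter> Y = {} \<and> set (rpos r) \<subseteq> Y
        \<longrightarrow> (case rhead r of None \<Rightarrow> False | Some a \<Rightarrow> a \<in> Y))"
    if "r \<in> set Pi" for r
    using rule_atoms_subset_prog_atoms[OF that]
    by (auto simp: sat_rule_fm Y_def split: option.split)
  then show ?thesis
    unfolding prog_fm_def sat_conj pmodel_reduct_iff by auto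
qed

lemma sat_star_prog_fm_iff_pmodel:
  fixes M :: "('s,'v,'f,'p) struc" and Pi :: "('f,'p,'s) rule list"
    and Q :: "'p \<Rightarrow> 'v list \<Rightarrow> bool"
  assumes "\<forall>r\<in>set Pi. \<forall>l\<in>set (rcn r). fpreds (snd l) \<inter> prog_atoms Pi = {}"
  defines "Y \<equiv> {a \<in> prog_atoms Pi. pint M a []}"
    and "Z \<equiv> {a \<in> prog_atoms Pi. Q a [] \<and> pint M a []}"
  shows "sat (ext_hat M Q) e (star (prog_atoms Pi) (prog_fm Pi)) \<longleftrightarrow>
           pmodel Z (reduct (\<lambda>l. sat M e (clit l)) Y Pi) \<and> sat M e (prog_fm Pi)"
proof -
  have "sat (ext_hat M Q) e (star (prog_atoms Pi) (rule_fm r)) \<longleftrightarrow>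
      ((\<forall>l\<in>set (rcn r). sat M e (clit l)) \<and> set (rneg r) \<inter> Y = {} \<and> set (rpos r) \<subseteq> Z
        \<longrightarrow> (case rhead r of None \<Rightarrow> False | Some a \<Rightarrow> a \<in> Z))
      \<and> sat M e (rule_fm r)"
    if "r \<in> set Pi" for r
    using rule_atoms_subset_prog_atoms[OF that] assms(1) that
    by (subst sat_star_rule_fm) (auto simp: Y_def Z_def split: option.split)
  then show ?thesis
    unfolding prog_fm_def sat_conj sat_star_conj pmodel_reduct_iff by auto
qed

lemma hat_less_iff_psubset:
  assumes "\<forall>a\<in>c. psort a = []"
  shows "hat_less psort c M Q \<longleftrightarrow> {a \<in> c. Q a []} \<subset> {a \<in> c. pint M a []}"
proof -
  have "tuple_of (univ M) (psort a) xs \<longleftrightarrow> xs = []" if "a \<in> c" for a xs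
    using assms that by (simp add: tuple_of_def)
  then show ?thesis
    by (auto simp: hat_less_def hat_le_def hat_eq_def)
qed

lemma SM_sat_prog_fm_iff_min_pmodel:
  fixes M :: "('s,'v,'f,'p) struc" and Pi :: "('f,'p,'s) rule list"
  assumes atoms_propositional: "\<forall>a\<in>prog_atoms Pi. psort a = []"
    and constraints_extensional: "\<forall>r\<in>set Pi. \<forall>l\<in>set (rcn r). fpreds (snd l) \<inter> prog_atoms Pi = {}"
  defines "Y \<equiv> {a \<in> prog_atoms Pi. pint M a []}"
  shows "SM_sat psort (prog_atoms Pi) M e (prog_fm Pi) \<longleftrightarrow>
           min_pmodel Y (reduct (\<lambda>l. sat M e (clit l)) Y Pi)"
proof -
  let ?c = "prog_atoms Pi" and ?R = "reduct (\<lambda>l. sat M e (clit l)) Y Pi"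
  have star_iff: "sat (ext_hat M Q) e (star ?c (prog_fm Pi)) \<longleftrightarrow>
      pmodel {a \<in> ?c. Q a [] \<and> pint M a []} ?R \<and> pmodel Y ?R" for Q
    unfolding Y_def sat_star_prog_fm_iff_pmodel[OF constraints_extensional] sat_prog_fm_iff_pmodel ..
  have smaller_model_iff:
    "(\<exists>Q. hat_less psort ?c M Q \<and> sat (ext_hat M Q) e (star ?c (prog_fm Pi))) \<longleftrightarrow>
       pmodel Y ?R \<and> (\<exists>Z. Z \<subset> Y \<and> pmodel Z ?R)"
  proof
    assume "\<exists>Q. hat_less psort ?c M Q \<and> sat (ext_hat M Q) e (star ?c (prog_fm Pi))"
    then obtain Q where "hat_less psort ?c M Q" and star: "sat (ext_hat M Q) e (star ?c (prog_fm Pi))"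
      by blast
    then have less: "{a \<in> ?c. Q a []} \<subset> Y"
      by (simp add: hat_less_iff_psubset[OF atoms_propositional] Y_def)
    then have "{a \<in> ?c. Q a [] \<and> pint M a []} = {a \<in> ?c. Q a []}"
      by (auto simp: Y_def)
    with star have "pmodel {a \<in> ?c. Q a []} ?R" "pmodel Y ?R"
      by (simp_all add: star_iff)
    with less show "pmodel Y ?R \<and> (\<exists>Z. Z \<subset> Y \<and> pmodel Z ?R)"
      by blast
  next
    assume "pmodel Y ?R \<and> (\<exists>Z. Z \<subset> Y \<and> pmodel Z ?R)"
    then obtain Z where "pmodel Y ?R" "Z \<subset> Y" "pmodel Z ?R"
      by blast
    moreover have "{a \<in> ?c. a \<in> Z} = Z" "{a \<in> ?c. a \<in> Z \<and> pint M a []} = Z"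
      using \<open>Z \<subset> Y\<close> by (auto simp: Y_def)
    ultimately have "hat_less psort ?c M (\<lambda>a _. a \<in> Z)"
      and "sat (ext_hat M (\<lambda>a _. a \<in> Z)) e (star ?c (prog_fm Pi))"
      by (simp_all add: hat_less_iff_psubset[OF atoms_propositional] star_iff Y_def)
    then show "\<exists>Q. hat_less psort ?c M Q \<and> sat (ext_hat M Q) e (star ?c (prog_fm Pi))"
      by blast
  qed
  show ?thesis
    unfolding SM_sat_def min_pmodel_def smaller_model_iff sat_prog_fm_iff_pmodel[of M e Pi, folded Y_def]
    by blast
qed

lemma univ_interp: "univ (interp U Ifn X) = U"
  by (simp add: interp_def)

lemma sat_merge_interp_if_disjoint:
  "fpreds F \<inter> sP = {} \<Longrightarrow>
     sat (merge sF sP (interp U Ifn X) J) e F = sat (merge sF {} (interp U Ifn {}) J) e F"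
  by (rule sat_cong) (auto simp: merge_def interp_def)

lemma bg_sat_clit_iff_sat_merge:
  assumes "bg_decides bg V C U Ifn" and "bg_interp bg J" and "univ J = U" and "snd l \<in> C"
  shows "bg_sat bg V {} (interp U Ifn {}) (\<lambda>N. sat N e0 (clit l)) \<longleftrightarrow>
           sat (merge V {} (interp U Ifn {}) J) e0 (clit l)"
proof
  assume "bg_sat bg V {} (interp U Ifn {}) (\<lambda>N. sat N e0 (clit l))"
  then obtain J' where "bg_interp bg J'" and "univ J' = U"
    and "sat (merge V {} (interp U Ifn {}) J') e0 (clit l)"
    unfolding bg_sat_def by (auto simp only: univ_interp)
  with assms show "sat (merge V {} (interp U Ifn {}) J) e0 (clit l)"
    unfolding bg_decides_def sat_clit by blast
next
  assume "sat (merge V {} (interp U Ifn {}) J) e0 (clit l)"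
  with assms(2,3) show "bg_sat bg V {} (interp U Ifn {}) (\<lambda>N. sat N e0 (clit l))"
    unfolding bg_sat_def univ_interp by blast
qed

lemma clingcon_program_constraint:
  assumes "clingcon_program V D C bg bgF bgP psort Pi" and "r \<in> set Pi" and "l \<in> set (rcn r)"
  shows "snd l \<in> C" and "fpreds (snd l) \<inter> prog_atoms Pi = {}"
proof -
  from assms show "snd l \<in> C"
    unfolding clingcon_program_def by blast
  with assms(1) show "fpreds (snd l) \<inter> prog_atoms Pi = {}"
    unfolding clingcon_program_def by blast
qed

lemma creduct_eq_reduct:
  assumes "clingcon_program V D C bg bgF bgP psort Pi"
    and "bg_decides bg V C U Ifn" and "bg_interp bg J" and "univ J = U"
  shows "creduct bg V U Ifn X Pi =
           reduct (\<lambda>l. sat (merge V (prog_atoms Pi) (interp U Ifn X) J) e0 (clit l)) X Pi"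
proof -
  let ?M = "merge V (prog_atoms Pi) (interp U Ifn X) J"
  have "bg_sat bg V {} (interp U Ifn {}) (\<lambda>N. sat N e0 (clit l)) \<longleftrightarrow> sat ?M e0 (clit l)"
    if "r \<in> set Pi" and "l \<in> set (rcn r)" for r l
  proof -
    note constraint = clingcon_program_constraint[OF assms(1) that]
    have "bg_sat bg V {} (interp U Ifn {}) (\<lambda>N. sat N e0 (clit l)) \<longleftrightarrow>
            sat (merge V {} (interp U Ifn {}) J) e0 (clit l)"
      by (rule bg_sat_clit_iff_sat_merge[OF assms(2-4) constraint(1)])
    also have "\<dots> \<longleftrightarrow> sat ?M e0 (clit l)"
      unfolding sat_clit sat_merge_interp_if_disjoint[OF constraint(2)] ..
    finally show ?thesis .
  qed
  then have "cn_holds bg V U Ifn (rcn r) \<longleftrightarrow> (\<forall>l\<in>set (rcn r). sat ?M e0 (clit l))"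
    if "r \<in> set Pi" for r
    using that unfolding cn_holds_def by blast
  then show ?thesis
    unfolding creduct_def reduct_def
    by (intro arg_cong[where f = concat] map_cong refl) simp
qed

lemma constraint_answer_set_iff_SM_sat_merge:
  assumes prog: "clingcon_program V D C bg bgF bgP psort Pi"
    and "X \<subseteq> prog_atoms Pi" and "bg_decides bg V C U Ifn" and "bg_interp bg J" and "univ J = U"
  shows "constraint_answer_set bg V U Ifn Pi X \<longleftrightarrow>
           SM_sat psort (prog_atoms Pi) (merge V (prog_atoms Pi) (interp U Ifn X) J) e0 (prog_fm Pi)"
proof -
  let ?M = "merge V (prog_atoms Pi) (interp U Ifn X) J"
  have "{a \<in> prog_atoms Pi. pint ?M a []} = X"
    using assms(2) by (auto simp: merge_def interp_def)
  moreover have "\<forall>a\<in>prog_atoms Pi. psort a = []"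
    using prog unfolding clingcon_program_def by blast
  moreover have "\<forall>r\<in>set Pi. \<forall>l\<in>set (rcn r). fpreds (snd l) \<inter> prog_atoms Pi = {}"
    using clingcon_program_constraint(2)[OF prog] by blast
  ultimately show ?thesis
    unfolding constraint_answer_set_def Let_def creduct_eq_reduct[OF prog assms(3-5)]
    by (simp add: SM_sat_prog_fm_iff_min_pmodel min_pmodel_def)
qed

theorem theorem3:
  fixes Pi :: "('f,'p,'s) rule list"
    and V :: "'f set" and D :: "'f \<Rightarrow> 's" and C :: "('f,'p,'s) fm set"
    and bg :: "('f,'p,'s) fm set" and bgF :: "'f set" and bgP :: "'p set"
    and psort :: "'p \<Rightarrow> 's list"
    and U :: "'s \<Rightarrow> 'v set" and Ifn :: "'f \<Rightarrow> 'v" and X :: "'p set"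
  assumes "clingcon_program V D C bg bgF bgP psort Pi"
    and "\<forall>s. U s \<noteq> {}"
    and "\<forall>v\<in>V. Ifn v \<in> U (D v)"
    and "X \<subseteq> prog_atoms Pi"
    and "bg_decides bg V C U Ifn"
  shows "constraint_answer_set bg V U Ifn Pi X \<longleftrightarrow>
         bg_sat bg V (prog_atoms Pi) (interp U Ifn X)
           (\<lambda>M. SM_sat psort (prog_atoms Pi) M e0 (prog_fm Pi))"
proof -
  \<comment> \<open>The hypotheses on U and Ifn only make the interpretation well-sorted.\<close>
  have iff_every_bg: "constraint_answer_set bg V U Ifn Pi X \<longleftrightarrow>
      SM_sat psort (prog_atoms Pi) (merge V (prog_atoms Pi) (interp U Ifn X) J) e0 (prog_fm Pi)"
    if "bg_interp bg J" and "univ J = U" for J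
    using constraint_answer_set_iff_SM_sat_merge[OF assms(1,4,5) that] .
  obtain J where "bg_interp bg J" and "univ J = U"
    using assms(5) unfolding bg_decides_def by blast
  then show ?thesis
    unfolding bg_sat_def univ_interp using iff_every_bg by blast
qed

end
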